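(* Let $n\ge1$, $\rho\in\mathbb{R}$ with $n+2-n\rho\neq 0$, and let $H_n$ be the $(2n+1)$-dimensional Heisenberg group with Lie algebra $\mathfrak{h}_n$ spanned by $e_1,\dots,e_{2n+1}$, whose only nonzero brackets are $[e_i,e_{n+i}]=e_{2n+1}$ ($1\le i\le n$). Let $g_0$ be a left-invariant metric, diagonal in this basis, with $g_I(0)=g_0(e_I,e_I)$, satisfying $g_{2n+1}(0)=g_i(0)g_{n+i}(0)$ for all $1\le i\le n$. Let $g(t)$ be the diagonal left-invariant metric with $g_j(t)=g_j(0)(1+bt)^{\frac{1-n\rho}{n+2-n\rho}}$ ($1\le j\le 2n$), $g_{2n+1}(t)=g_{2n+1}(0)(1+bt)^{\frac{n+n\rho}{n\rho-n-2}}$, $b=(n+2-n\rho)\frac{g_{2n+1}(0)}{g_1(0)g_{1+n}(0)}$, which is the solution of the Ricci–Bourguignon flow $\partial_t g=-2\mathrm{Ric}+2\rho Rg$ starting at $g_0$. Then $(H_n,g_0)$ is of Heisenberg type, but the Heisenberg type property is not preserved along $g(t)$: for $t\neq 0$ (with $1+bt>0$), $(\mathfrak{h}_n,g(t))$ is not of Heisenberg type.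
   Context: For a 2-step nilpotent Lie algebra $\mathcal{N}$ with inner product $\langle\cdot,\cdot\rangle$, let $\mathcal{Z}$ be its center and $\mathcal{V}$ the orthogonal complement of $\mathcal{Z}$. For $Z\in\mathcal{Z}$ define the skew-symmetric map $j(Z):\mathcal{V}\to\mathcal{V}$ by $\langle j(Z)X,Y\rangle=\langle Z,[X,Y]\rangle$ for all $X,Y\in\mathcal{V}$. $(\mathcal{N},\langle\cdot,\cdot\rangle)$ is of Heisenberg type if $j(Z)^2=-|Z|^2\,\mathrm{Id}$ for all $Z\in\mathcal{Z}$. Here $\mathcal{Z}=\mathrm{span}\{e_{2n+1}\}$ and, for diagonal metrics, $\mathcal{V}=\mathrm{span}\{e_1,\dots,e_{2n}\}$; $j$ and norms are taken with respect to $g(t)$ at time $t$. *)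

theory Defs
  imports Complex_Main
begin

text \<open>The Heisenberg Lie algebra h_n is modelled as R^(2n+1): vectors are functions
  nat => real supported on the index set {1..2n+1} (components w.r.t. the basis
  e_1,...,e_(2n+1)).\<close>

definition heis_carrier :: "nat \<Rightarrow> (nat \<Rightarrow> real) set" where
  "heis_carrier n = {X. \<forall>k. k \<notin> {1..2*n+1} \<longrightarrow> X k = 0}"

text \<open>Lie bracket: the only nonzero brackets of basis vectors are [e_i, e_(n+i)] = e_(2n+1).\<close>
definition heis_bracket :: "nat \<Rightarrow> (nat \<Rightarrow> real) \<Rightarrow> (nat \<Rightarrow> real) \<Rightarrow> (nat \<Rightarrow> real)" where
  "heis_bracket n X Y = (\<lambda>k. if k = 2*n+1
      then (\<Sum>i=1..n. X i * Y (n+i) - X (n+i) * Y i) else 0)"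

definition diag_inner :: "nat \<Rightarrow> (nat \<Rightarrow> real) \<Rightarrow> (nat \<Rightarrow> real) \<Rightarrow> (nat \<Rightarrow> real) \<Rightarrow> real" where
  "diag_inner n g X Y = (\<Sum>k=1..2*n+1. g k * X k * Y k)"

definition lie_center :: "'v set \<Rightarrow> ('v \<Rightarrow> 'v \<Rightarrow> 'v) \<Rightarrow> 'v \<Rightarrow> 'v set" where
  "lie_center C br zero = {Z \<in> C. \<forall>X\<in>C. br Z X = zero}"

definition center_compl :: "'v set \<Rightarrow> ('v \<Rightarrow> 'v \<Rightarrow> 'v) \<Rightarrow> 'v \<Rightarrow> ('v \<Rightarrow> 'v \<Rightarrow> real) \<Rightarrow> 'v set" where
  "center_compl C br zero ip = {X \<in> C. \<forall>Z\<in>lie_center C br zero. ip X Z = 0}"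

definition j_map :: "'v set \<Rightarrow> ('v \<Rightarrow> 'v \<Rightarrow> 'v) \<Rightarrow> 'v \<Rightarrow> ('v \<Rightarrow> 'v \<Rightarrow> real) \<Rightarrow> 'v \<Rightarrow> 'v \<Rightarrow> 'v" where
  "j_map C br zero ip Z X = (THE W. W \<in> center_compl C br zero ip \<and>
      (\<forall>Y\<in>center_compl C br zero ip. ip W Y = ip Z (br X Y)))"

definition is_H_type :: "'v set \<Rightarrow> ('v \<Rightarrow> 'v \<Rightarrow> 'v) \<Rightarrow> 'v \<Rightarrow> ('v \<Rightarrow> 'v \<Rightarrow> real)
    \<Rightarrow> ('v \<Rightarrow> 'v) \<Rightarrow> ('v \<Rightarrow> real \<Rightarrow> 'v) \<Rightarrow> bool" where
  "is_H_type C br zero ip neg scale \<longleftrightarrow>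
     (\<forall>Z\<in>lie_center C br zero. \<forall>X\<in>center_compl C br zero ip.
        j_map C br zero ip Z (j_map C br zero ip Z X) = neg (scale X (ip Z Z)))"

definition heis_H_type :: "nat \<Rightarrow> (nat \<Rightarrow> real) \<Rightarrow> bool" where
  "heis_H_type n g = is_H_type (heis_carrier n) (heis_bracket n) (\<lambda>_. 0) (diag_inner n g)
      (\<lambda>X. \<lambda>k. - X k) (\<lambda>X c. \<lambda>k. c * X k)"

end

theory Submission
  imports Defs
begin

text \<open>For a positive diagonal metric g the map j(Z) can be solved for explicitly: it maps
  e_i into the span of e_(n+i) and vice versa, and j(Z)^2 acts on the plane spanned by e_i and
  e_(n+i) as multiplication by -|Z|^2 g_(2n+1) / (g_i g_(n+i)). Hence the metric is of Heisenberg
  type exactly when g_(2n+1) = g_i g_(n+i) for all i. Along the flow this relation would force the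
  exponent of 1 + bt in g_(2n+1) to be twice the exponent in g_1, i.e. -(n + n\<rho>) = 2(1 - n\<rho>),
  which means n + 2 - n\<rho> = 0.\<close>

definition heis_Z :: "nat \<Rightarrow> (nat \<Rightarrow> real) set" where
  "heis_Z n = {Z. \<forall>k. k \<noteq> 2*n+1 \<longrightarrow> Z k = 0}"

definition heis_V :: "nat \<Rightarrow> (nat \<Rightarrow> real) set" where
  "heis_V n = {X. \<forall>k. k \<notin> {1..2*n} \<longrightarrow> X k = 0}"

definition heis_j :: "nat \<Rightarrow> (nat \<Rightarrow> real) \<Rightarrow> (nat \<Rightarrow> real) \<Rightarrow> (nat \<Rightarrow> real) \<Rightarrow> (nat \<Rightarrow> real)" where
  "heis_j n g Z X = (\<lambda>k. if k \<in> {1..n} then - g (2*n+1) * Z (2*n+1) * X (n+k) / g k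
     else if k \<in> {n+1..2*n} then g (2*n+1) * Z (2*n+1) * X (k-n) / g k else 0)"

lemma sum_heis_split:
  fixes f :: "nat \<Rightarrow> real"
  shows "sum f {1..2*n+1} = (\<Sum>i=1..n. f i + f (n+i)) + f (2*n+1)"
proof -
  have "sum f {1..n+n} = sum f {1..n} + sum f {n+1..n+n}"
    by (rule sum.ub_add_nat) simp
  moreover have "sum f {1+n..n+n} = (\<Sum>i=1..n. f (i+n))"
    by (rule sum.shift_bounds_cl_nat_ivl)
  ultimately show ?thesis
    by (simp add: sum.cl_ivl_Suc sum.distrib mult_2 add.commute)
qed

lemma diag_inner_heis_Z_right:
  assumes "Z \<in> heis_Z n"
  shows "diag_inner n g X Z = g (2*n+1) * X (2*n+1) * Z (2*n+1)"
proof -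
  have "(\<Sum>i=1..n. g i * X i * Z i + g (n+i) * X (n+i) * Z (n+i)) = 0"
    by (rule sum.neutral) (use assms in \<open>auto simp: heis_Z_def\<close>)
  then show ?thesis
    unfolding diag_inner_def sum_heis_split[of _ n] by simp
qed

lemma diag_inner_commute: "diag_inner n g X Y = diag_inner n g Y X"
  unfolding diag_inner_def by (simp add: ac_simps)

lemma diag_inner_diff_left:
  "diag_inner n g X Y - diag_inner n g W Y = diag_inner n g (\<lambda>k. X k - W k) Y"
  unfolding diag_inner_def sum_subtractf[symmetric] by (simp add: algebra_simps)

lemma heis_index_cases:
  fixes k n :: nat
  obtains "k \<in> {1..n}" | i where "i \<in> {1..n}" "k = n+i" | "k \<notin> {1..2*n}"
proof (cases "k \<in> {1..2*n}")
  case True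
  then show ?thesis
    using that(1) that(2)[of "k-n"] by (cases "k \<le> n") auto
qed (rule that(3))

lemma lie_center_heis: "lie_center (heis_carrier n) (heis_bracket n) (\<lambda>_. 0) = heis_Z n"
proof (intro equalityI subsetI)
  fix Z assume "Z \<in> lie_center (heis_carrier n) (heis_bracket n) (\<lambda>_. 0)"
  then have ZC: "Z \<in> heis_carrier n"
    and central: "\<And>X. X \<in> heis_carrier n \<Longrightarrow> heis_bracket n Z X (2*n+1) = 0"
    unfolding lie_center_def by auto
  have bracket_basis: "heis_bracket n Z (\<lambda>j. if j = m then 1 else 0) (2*n+1)
      = (\<Sum>i=1..n. (if n+i = m then Z i else 0) - (if i = m then Z (n+i) else 0))" for m
    unfolding heis_bracket_def by (auto intro!: sum.cong)
  have basis_in: "(\<lambda>j. if j = m then 1 else 0) \<in> heis_carrier n" if "m \<in> {1..2*n+1}" for m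
    using that unfolding heis_carrier_def by auto
  show "Z \<in> heis_Z n"
    unfolding heis_Z_def
  proof (intro CollectI allI impI)
    fix k assume "k \<noteq> 2*n+1"
    then show "Z k = 0"
    proof (cases k n rule: heis_index_cases)
      case 3
      then show ?thesis using ZC \<open>k \<noteq> 2*n+1\<close> unfolding heis_carrier_def by auto
    next
      case 1
      then show ?thesis
        using central[OF basis_in, of "n+k"] bracket_basis[of "n+k"] by simp
    next
      case (2 i)
      then show ?thesis
        using central[OF basis_in, of i] bracket_basis[of i] by (simp add: sum_negf)
    qed
  qed
next
  fix Z assume Z: "Z \<in> heis_Z n"
  have "heis_bracket n Z X = (\<lambda>_. 0)" for X
    using Z unfolding heis_bracket_def heis_Z_def by (auto intro!: sum.neutral)
  moreover have "Z \<in> heis_carrier n"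
    using Z unfolding heis_carrier_def heis_Z_def by auto
  ultimately show "Z \<in> lie_center (heis_carrier n) (heis_bracket n) (\<lambda>_. 0)"
    unfolding lie_center_def by auto
qed

lemma center_compl_heis:
  assumes "g (2*n+1) \<noteq> 0"
  shows "center_compl (heis_carrier n) (heis_bracket n) (\<lambda>_. 0) (diag_inner n g) = heis_V n"
proof (intro equalityI subsetI)
  fix X assume X: "X \<in> center_compl (heis_carrier n) (heis_bracket n) (\<lambda>_. 0) (diag_inner n g)"
  define E where "E = (\<lambda>j. if j = 2*n+1 then 1 else (0::real))"
  have E: "E \<in> heis_Z n"
    unfolding E_def heis_Z_def by simp
  then have "diag_inner n g X E = 0"
    using X unfolding center_compl_def lie_center_heis by auto
  moreover have "diag_inner n g X E = g (2*n+1) * X (2*n+1)"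
    unfolding diag_inner_heis_Z_right[OF E] by (simp add: E_def)
  ultimately have "X (2*n+1) = 0"
    using assms by simp
  moreover have "X \<in> heis_carrier n"
    using X unfolding center_compl_def by auto
  ultimately show "X \<in> heis_V n"
    unfolding heis_carrier_def heis_V_def by (auto simp: le_Suc_eq)
next
  fix X assume "X \<in> heis_V n"
  then show "X \<in> center_compl (heis_carrier n) (heis_bracket n) (\<lambda>_. 0) (diag_inner n g)"
    unfolding center_compl_def lie_center_heis
    unfolding heis_carrier_def heis_V_def by (auto simp: diag_inner_heis_Z_right)
qed

lemma heis_j_in_heis_V: "heis_j n g Z X \<in> heis_V n"
  unfolding heis_j_def heis_V_def by auto

lemma heis_j_heis_j:
  assumes "i \<in> {1..n}"
  shows "heis_j n g Z (heis_j n g Z X) i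
           = - (g (2*n+1) * Z (2*n+1))\<^sup>2 / (g i * g (n+i)) * X i"
    and "heis_j n g Z (heis_j n g Z X) (n+i)
           = - (g (2*n+1) * Z (2*n+1))\<^sup>2 / (g i * g (n+i)) * X (n+i)"
  using assms by (auto simp: heis_j_def power2_eq_square mult_ac)

context
  fixes n :: nat and g :: "nat \<Rightarrow> real"
  assumes g_pos: "\<And>k. k \<in> {1..2*n+1} \<Longrightarrow> g k > 0"
begin

lemma diag_inner_self_eq_0:
  assumes "diag_inner n g X X = 0" and "k \<in> {1..2*n+1}"
  shows "X k = 0"
proof -
  have "\<forall>k\<in>{1..2*n+1}. g k * X k * X k = 0"
    using assms(1) g_pos unfolding diag_inner_def
    by (subst sum_nonneg_eq_0_iff[symmetric])
       (auto intro!: mult_nonneg_nonneg simp: less_imp_le mult.assoc)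
  then have "g k * X k * X k = 0"
    using assms(2) by blast
  then show ?thesis
    using g_pos[OF assms(2)] by simp
qed

lemma diag_inner_heis_V_unique:
  assumes "W \<in> heis_V n" "W' \<in> heis_V n"
    and "\<And>Y. Y \<in> heis_V n \<Longrightarrow> diag_inner n g W Y = diag_inner n g W' Y"
  shows "W = W'"
proof
  fix k
  define D where "D = (\<lambda>k. W k - W' k)"
  have "D \<in> heis_V n"
    using assms(1,2) unfolding D_def heis_V_def by auto
  then have "diag_inner n g D D = 0"
    using assms(3) by (simp add: D_def diag_inner_diff_left[symmetric])
  then have "D k = 0"
    using diag_inner_self_eq_0 \<open>D \<in> heis_V n\<close> unfolding heis_V_def by fastforce
  then show "W k = W' k"
    by (simp add: D_def)
qed

lemma center_compl_heis_pos:
  "center_compl (heis_carrier n) (heis_bracket n) (\<lambda>_. 0) (diag_inner n g) = heis_V n"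
  using g_pos[of "2*n+1"] by (intro center_compl_heis) simp

lemma diag_inner_heis_j:
  assumes Z: "Z \<in> heis_Z n"
  shows "diag_inner n g (heis_j n g Z X) Y = diag_inner n g Z (heis_bracket n X Y)"
proof -
  have "diag_inner n g Z (heis_bracket n X Y)
      = (\<Sum>i=1..n. g (2*n+1) * Z (2*n+1) * (X i * Y (n+i) - X (n+i) * Y i))"
    by (simp add: diag_inner_commute[of n g Z] diag_inner_heis_Z_right[OF Z]
        heis_bracket_def sum_distrib_left mult_ac)
  also have "\<dots> = (\<Sum>i=1..n. g i * heis_j n g Z X i * Y i
      + g (n+i) * heis_j n g Z X (n+i) * Y (n+i))"
  proof (rule sum.cong)
    fix i assume i: "i \<in> {1..n}"
    then have "g i > 0" "g (n+i) > 0"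
      using g_pos by auto
    then show "g (2*n+1) * Z (2*n+1) * (X i * Y (n+i) - X (n+i) * Y i)
        = g i * heis_j n g Z X i * Y i + g (n+i) * heis_j n g Z X (n+i) * Y (n+i)"
      using i by (simp add: heis_j_def field_simps)
  qed simp
  also have "\<dots> = diag_inner n g (heis_j n g Z X) Y"
    unfolding diag_inner_def sum_heis_split[of _ n] by (simp add: heis_j_def)
  finally show ?thesis ..
qed

lemma j_map_heis:
  assumes "Z \<in> heis_Z n"
  shows "j_map (heis_carrier n) (heis_bracket n) (\<lambda>_. 0) (diag_inner n g) Z X = heis_j n g Z X"
  unfolding j_map_def center_compl_heis_pos
proof (rule the_equality)
  show "heis_j n g Z X \<in> heis_V n \<and>
      (\<forall>Y\<in>heis_V n. diag_inner n g (heis_j n g Z X) Y = diag_inner n g Z (heis_bracket n X Y))"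
    using diag_inner_heis_j[OF assms] by (simp add: heis_j_in_heis_V)
next
  fix W assume "W \<in> heis_V n \<and>
      (\<forall>Y\<in>heis_V n. diag_inner n g W Y = diag_inner n g Z (heis_bracket n X Y))"
  then show "W = heis_j n g Z X"
    by (intro diag_inner_heis_V_unique) (auto simp: heis_j_in_heis_V diag_inner_heis_j[OF assms])
qed

lemma heis_H_type_iff_heis_j:
  "heis_H_type n g \<longleftrightarrow>
     (\<forall>Z\<in>heis_Z n. \<forall>X\<in>heis_V n. heis_j n g Z (heis_j n g Z X)
        = (\<lambda>k. - (g (2*n+1) * Z (2*n+1) ^ 2 * X k)))"
  unfolding heis_H_type_def is_H_type_def lie_center_heis center_compl_heis_pos
  by (intro ball_cong refl)
     (simp add: j_map_heis diag_inner_heis_Z_right power2_eq_square mult.assoc)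

theorem heis_H_type_iff:
  "heis_H_type n g \<longleftrightarrow> (\<forall>i\<in>{1..n}. g (2*n+1) = g i * g (n+i))"
  unfolding heis_H_type_iff_heis_j
proof
  assume H: "\<forall>Z\<in>heis_Z n. \<forall>X\<in>heis_V n. heis_j n g Z (heis_j n g Z X)
       = (\<lambda>k. - (g (2*n+1) * Z (2*n+1) ^ 2 * X k))"
  show "\<forall>i\<in>{1..n}. g (2*n+1) = g i * g (n+i)"
  proof
    fix i assume i: "i \<in> {1..n}"
    let ?Z = "\<lambda>j. if j = 2*n+1 then 1 else 0" and ?X = "\<lambda>j. if j = i then 1 else 0"
    have Z: "?Z \<in> heis_Z n" and X: "?X \<in> heis_V n"
      using i unfolding heis_Z_def heis_V_def by auto
    have "heis_j n g ?Z (heis_j n g ?Z ?X) i = - g (2*n+1)"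
      using fun_cong[OF H[rule_format, OF Z X], of i] by simp
    then have "g (2*n+1) ^ 2 / (g i * g (n+i)) = g (2*n+1)"
      unfolding heis_j_heis_j(1)[OF i] by simp
    moreover have "g i > 0" "g (n+i) > 0" "g (2*n+1) > 0"
      using g_pos i by auto
    ultimately show "g (2*n+1) = g i * g (n+i)"
      by (simp add: field_simps power2_eq_square)
  qed
next
  assume rel: "\<forall>i\<in>{1..n}. g (2*n+1) = g i * g (n+i)"
  have c_pos: "g (2*n+1) > 0"
    using g_pos by simp
  have "heis_j n g Z (heis_j n g Z X) k = - (g (2*n+1) * Z (2*n+1) ^ 2 * X k)"
    if "X \<in> heis_V n" for Z X k
  proof (cases k n rule: heis_index_cases)
    case 1
    then have "g k * g (n+k) = g (2*n+1)"
      using rel by simp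
    then show ?thesis
      unfolding heis_j_heis_j(1)[OF 1] using c_pos by (simp add: power2_eq_square)
  next
    case (2 i)
    then have "g i * g (n+i) = g (2*n+1)"
      using rel by simp
    then show ?thesis
      unfolding \<open>k = n+i\<close> heis_j_heis_j(2)[OF 2(1)] using c_pos by (simp add: power2_eq_square)
  next
    case 3
    with that show ?thesis
      using heis_j_in_heis_V[of n g Z "heis_j n g Z X"] unfolding heis_V_def by auto
  qed
  then show "\<forall>Z\<in>heis_Z n. \<forall>X\<in>heis_V n. heis_j n g Z (heis_j n g Z X)
       = (\<lambda>k. - (g (2*n+1) * Z (2*n+1) ^ 2 * X k))"
    by blast
qed

end

lemma ricci_bourguignon_exponents_ne:
  fixes m x :: real
  assumes "m + 2 - x \<noteq> 0"
  shows "(m + x) / (x - m - 2) \<noteq> 2 * ((1 - x) / (m + 2 - x))"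
proof
  assume eq: "(m + x) / (x - m - 2) = 2 * ((1 - x) / (m + 2 - x))"
  have "x - m - 2 = - (m + 2 - x)"
    by simp
  with eq have "- (m + x) / (m + 2 - x) = 2 * (1 - x) / (m + 2 - x)"
    by (simp only: divide_minus_right minus_divide_left times_divide_eq_right)
  then have "- (m + x) = 2 * (1 - x)"
    using assms by (metis divide_cancel_right)
  then show False
    using assms by simp
qed

lemma powr_exponent_of_product_relation:
  fixes s a e c1 c2 :: real
  assumes "s > 0" "s \<noteq> 1" "c1 * c2 \<noteq> 0"
    and "(c1 * c2) * s powr a = (c1 * s powr e) * (c2 * s powr e)"
  shows "a = e + e"
proof -
  have "(c1 * c2) * s powr a = (c1 * c2) * (s powr e * s powr e)"
    using assms(4) by (simp add: mult_ac)
  also have "s powr e * s powr e = s powr (e + e)"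
    by (rule powr_add[symmetric])
  finally have "s powr a = s powr (e + e)"
    using assms(3) by simp
  then show ?thesis
    using powr_inj[OF assms(1,2)] by simp
qed

theorem proposition2p5:
  fixes n :: nat and \<rho> :: real and g0 :: "nat \<Rightarrow> real"
  assumes n_ge: "n \<ge> 1"
    and rho: "real n + 2 - real n * \<rho> \<noteq> 0"
    and pos: "\<And>k. k \<in> {1..2*n+1} \<Longrightarrow> g0 k > 0"
    and comp: "\<And>i. i \<in> {1..n} \<Longrightarrow> g0 (2*n+1) = g0 i * g0 (n+i)"
  defines "b \<equiv> (real n + 2 - real n * \<rho>) * g0 (2*n+1) / (g0 1 * g0 (1+n))"
  defines "g \<equiv> (\<lambda>t::real. \<lambda>k::nat.
      if k = 2*n+1 then g0 k * (1 + b*t) powr ((real n + real n * \<rho>) / (real n * \<rho> - real n - 2))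
      else g0 k * (1 + b*t) powr ((1 - real n * \<rho>) / (real n + 2 - real n * \<rho>)))"
  shows "heis_H_type n g0 \<and>
         (\<forall>t::real. t \<noteq> 0 \<and> 1 + b*t > 0 \<longrightarrow> \<not> heis_H_type n (g t))"
proof -
  let ?a = "(real n + real n * \<rho>) / (real n * \<rho> - real n - 2)"
    and ?e = "(1 - real n * \<rho>) / (real n + 2 - real n * \<rho>)"
  have "heis_H_type n g0"
    using heis_H_type_iff[where n=n and g=g0] pos comp by simp
  moreover have "\<not> heis_H_type n (g t)" if "t \<noteq> 0" and s_pos: "1 + b*t > 0" for t
  proof
    assume "heis_H_type n (g t)"
    moreover have "\<And>k. k \<in> {1..2*n+1} \<Longrightarrow> g t k > 0"
      using pos s_pos unfolding g_def by simp
    ultimately have "\<forall>i\<in>{1..n}. g t (2*n+1) = g t i * g t (n+i)"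
      using heis_H_type_iff[where n=n and g="g t"] by auto
    then have "g t (2*n+1) = g t 1 * g t (n+1)"
      using n_ge by (auto dest: bspec[of _ _ 1])
    then have "(g0 1 * g0 (n+1)) * (1 + b*t) powr ?a
        = (g0 1 * (1 + b*t) powr ?e) * (g0 (n+1) * (1 + b*t) powr ?e)"
      using n_ge comp[of 1] unfolding g_def by simp
    moreover have "b \<noteq> 0"
      using rho pos[of 1] pos[of "1+n"] pos[of "2*n+1"] n_ge unfolding b_def by simp
    then have "1 + b*t \<noteq> 1"
      using \<open>t \<noteq> 0\<close> by simp
    moreover have "g0 1 * g0 (n+1) \<noteq> 0"
      using pos[of 1] pos[of "n+1"] n_ge by simp
    ultimately have "?a = ?e + ?e"
      using powr_exponent_of_product_relation[OF s_pos] by blast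
    then show False
      using ricci_bourguignon_exponents_ne[OF rho] by simp
  qed
  ultimately show ?thesis
    by blast
qed

end
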